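(* In the private bug bounty model with a single artificial bug described in the context, let $c_a(\overline v)$ be the unique fixed point of $\hat c\mapsto\overline v\,\Phi(\hat c;1)$. Then $c_a(\overline v)$ increases in $\overline v$ and $C(\overline v)=[0,c_a(\overline v)]$, where $$C(\overline v)=\Big\{\hat c:\ \hat c=\Psi(\hat c;\boldsymbol v,v_a,q_a),\ \sum_l v^l+v_a\le\overline v,\ v^l\ge0,\ v_a\ge0,\ q_a\in[0,1]\Big\}.$$
   Context: Private bug bounty model. There are $L$ potential organic bugs; bug $l$ exists with probability $\mu^l\in(0,1]$ and has complexity $q^l\in(0,1]$. There are $n$ agents with private search costs drawn i.i.d. from a distribution $F$ with support $[\underline c,\overline c]$ ($-\infty\le\underline c<\overline c\le\infty$, $\overline c>0$), continuous with full support, finite density $f$ and $F/f$ non-decreasing; $F(\hat c)$ denotes the distribution function. The designer has budget $\overline v>0$, sets prizes $v^l\ge0$ for organic bugs, and inserts one artificial bug (existing with certainty) with prize $v_a\ge0$ and complexity $q_a\in[0,1]$. A searching agent finds each existing bug of complexity $q$ with probability $q$, independently across agents and bugs; the prize of a found bug goes to one of its finders chosen uniformly at random. $\Phi(\hat c;q)$ is the probability that a searching agent wins the prize of an existing bug of complexity $q$ when each of the other $n-1$ agents searches iff his/her cost is at most $\hat c$. $\Psi(\hat c;\boldsymbol v,v_a,q_a)=\sum_l v^l\mu^l\Phi(\hat c;q^l)+v_a\Phi(\hat c;q_a)$. *)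

theory Defs
  imports "HOL-Analysis.Analysis" "HOL-Library.Extended_Real"
begin

definition cost_dist :: "ereal \<Rightarrow> ereal \<Rightarrow> (real \<Rightarrow> real) \<Rightarrow> (real \<Rightarrow> real) \<Rightarrow> bool" where
  "cost_dist cl ch F f \<longleftrightarrow>
     cl < ch \<and> 0 < ch \<and>
     continuous_on UNIV F \<and> mono F \<and>
     (F \<longlongrightarrow> 0) at_bot \<and> (F \<longlongrightarrow> 1) at_top \<and>
     (\<forall>x. ereal x \<le> cl \<longrightarrow> F x = 0) \<and>
     (\<forall>x. ch \<le> ereal x \<longrightarrow> F x = 1) \<and>
     strict_mono_on {x. cl < ereal x \<and> ereal x < ch} F \<and>
     (\<forall>x. cl < ereal x \<and> ereal x < ch \<longrightarrow> (F has_real_derivative f x) (at x)) \<and>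
     mono_on {x. cl < ereal x \<and> ereal x < ch} (\<lambda>x. F x / f x)"

text \<open>Probability that a searching agent wins the prize of an existing bug of complexity q,
  when each of the other n-1 agents searches iff cost \<le> c: the agent finds it (prob. q),
  k of the others find it (Binomial(n-1, q F c)), and the prize is split uniformly among k+1 finders.\<close>
definition Phi :: "(real \<Rightarrow> real) \<Rightarrow> nat \<Rightarrow> real \<Rightarrow> real \<Rightarrow> real" where
  "Phi F n c q = q * (\<Sum>k<n. real ((n - 1) choose k) * (q * F c) ^ k
                        * (1 - q * F c) ^ (n - 1 - k) / real (k + 1))"

definition Psi :: "(real \<Rightarrow> real) \<Rightarrow> nat \<Rightarrow> nat \<Rightarrow> (nat \<Rightarrow> real) \<Rightarrow> (nat \<Rightarrow> real)
                   \<Rightarrow> real \<Rightarrow> (nat \<Rightarrow> real) \<Rightarrow> real \<Rightarrow> real \<Rightarrow> real" where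
  "Psi F n L mu q c v va qa = (\<Sum>l<L. v l * mu l * Phi F n c (q l)) + va * Phi F n c qa"

definition Cset :: "(real \<Rightarrow> real) \<Rightarrow> nat \<Rightarrow> nat \<Rightarrow> (nat \<Rightarrow> real) \<Rightarrow> (nat \<Rightarrow> real) \<Rightarrow> real \<Rightarrow> real set" where
  "Cset F n L mu q vbar = {c. \<exists>v va qa. c = Psi F n L mu q c v va qa
      \<and> (\<Sum>l<L. v l) + va \<le> vbar \<and> (\<forall>l<L. 0 \<le> v l) \<and> 0 \<le> va \<and> 0 \<le> qa \<and> qa \<le> 1}"

definition c_a :: "(real \<Rightarrow> real) \<Rightarrow> nat \<Rightarrow> real \<Rightarrow> real" where
  "c_a F n vbar = (THE c. c = vbar * Phi F n c 1)"

end

theory Submission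
  imports Defs
begin

text \<open>
  Averaging the binomial distribution of the number of rival finders gives the closed form
  \<open>\<Phi>(c; q) = (q / n) \<Sum>j<n. (1 - q F(c))\<^sup>j\<close>. Hence \<open>0 \<le> \<Phi>(c; q) \<le> \<Phi>(c; 1)\<close>, and
  \<open>g(c) = \<Phi>(c; 1)\<close> is continuous, nonincreasing and takes values in \<open>(0, 1]\<close>. For \<open>v > 0\<close> the map
  \<open>c \<mapsto> c - v g(c)\<close> is therefore strictly increasing and changes sign on \<open>[0, v]\<close>, so it has a
  unique zero \<open>c\<^sub>a(v)\<close>, and \<open>c \<le> c\<^sub>a(v)\<close> iff \<open>c \<le> v g(c)\<close>. Every prize scheme within budget gives
  \<open>0 \<le> \<Psi>(c) \<le> v g(c)\<close>, so its equilibrium cutoffs lie in \<open>[0, c\<^sub>a(v)]\<close>; conversely, every such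
  cutoff is implemented by the artificial bug alone, with \<open>q\<^sub>a = 1\<close> and \<open>v\<^sub>a = c / g(c)\<close>.
\<close>

lemma mono_le_tendsto_at_top:
  fixes f :: "'a::linorder \<Rightarrow> 'b::linorder_topology"
  assumes "mono f" "(f \<longlongrightarrow> l) at_top"
  shows "f x \<le> l"
proof (rule tendsto_lowerbound[OF assms(2)])
  show "\<forall>\<^sub>F y in at_top. f x \<le> f y"
    unfolding eventually_at_top_linorder by (rule exI[of _ x]) (auto intro: monoD[OF assms(1)])
qed simp

lemma mono_ge_tendsto_at_bot:
  fixes f :: "'a::linorder \<Rightarrow> 'b::linorder_topology"
  assumes "mono f" "(f \<longlongrightarrow> l) at_bot"
  shows "l \<le> f x"
proof (rule tendsto_upperbound[OF assms(2)])
  show "\<forall>\<^sub>F y in at_bot. f y \<le> f x"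
    unfolding eventually_at_bot_linorder by (rule exI[of _ x]) (auto intro: monoD[OF assms(1)])
qed simp

lemma cost_dist_range:
  assumes "cost_dist cl ch F f"
  shows "0 \<le> F x" "F x \<le> 1"
proof -
  have "mono F" "(F \<longlongrightarrow> 0) at_bot" "(F \<longlongrightarrow> 1) at_top"
    using assms unfolding cost_dist_def by auto
  then show "0 \<le> F x" "F x \<le> 1"
    using mono_ge_tendsto_at_bot mono_le_tendsto_at_top by metis+
qed

text \<open>The expected share of the prize of a finder when each of \<open>n - 1\<close> rivals finds the bug
  independently with probability \<open>p\<close>.\<close>

definition finder_share :: "nat \<Rightarrow> real \<Rightarrow> real" where
  "finder_share n p = (\<Sum>j<n. (1 - p) ^ j) / real n"

lemma mult_finder_share: "p * finder_share n p = (1 - (1 - p) ^ n) / real n"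
  unfolding finder_share_def using one_diff_power_eq[of "1 - p" n] by simp

lemma sum_binomial_div_Suc:
  fixes p :: real
  shows "(\<Sum>k\<le>m. real (m choose k) * p ^ k * (1 - p) ^ (m - k) / real (Suc k))
       = finder_share (Suc m) p" (is "?lhs = _")
proof (cases "p = 0")
  case True
  then show ?thesis
    by (simp add: finder_share_def atMost_atLeast0 sum.atLeast_Suc_atMost power_0_left)
next
  case False
  have binomial: "1 - (1 - p) ^ Suc m = (\<Sum>k\<le>m. real (Suc m choose Suc k) * p ^ Suc k * (1 - p) ^ (m - k))"
  proof -
    have "(1::real) = (p + (1 - p)) ^ Suc m" by simp
    also have "\<dots> = (\<Sum>k\<le>Suc m. real (Suc m choose k) * p ^ k * (1 - p) ^ (Suc m - k))"
      by (subst binomial_ring) simp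
    also have "\<dots> = (1 - p) ^ Suc m + (\<Sum>k\<le>m. real (Suc m choose Suc k) * p ^ Suc k * (1 - p) ^ (m - k))"
      by (subst sum.atMost_Suc_shift) simp
    finally show ?thesis by simp
  qed
  have "p * ?lhs = (\<Sum>k\<le>m. real (Suc m choose Suc k) * p ^ Suc k * (1 - p) ^ (m - k)) / real (Suc m)"
    unfolding sum_distrib_left sum_divide_distrib
  proof (rule sum.cong[OF refl])
    fix k
    have "real (Suc m choose Suc k) = real (Suc m) * real (m choose k) / real (Suc k)"
      using Suc_times_binomial[of k m] by (simp add: field_simps flip: of_nat_mult)
    then show "p * (real (m choose k) * p ^ k * (1 - p) ^ (m - k) / real (Suc k)) =
        real (Suc m choose Suc k) * p ^ Suc k * (1 - p) ^ (m - k) / real (Suc m)"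
      by (simp add: field_simps del: binomial_Suc_Suc of_nat_Suc)
  qed
  also have "\<dots> = p * finder_share (Suc m) p"
    by (simp only: mult_finder_share flip: binomial)
  finally show ?thesis using False by simp
qed

lemma Phi_eq_finder_share:
  assumes "n \<ge> 1"
  shows "Phi F n c q = q * finder_share n (q * F c)"
proof -
  obtain m where "n = Suc m" using assms by (cases n) auto
  then show ?thesis
    unfolding Phi_def using sum_binomial_div_Suc[of m "q * F c"] by (simp add: lessThan_Suc_atMost)
qed

lemma finder_share_pos:
  assumes "n \<ge> 1" "0 \<le> p" "p \<le> 1"
  shows "0 < finder_share n p"
proof -
  obtain m where n: "n = Suc m" using assms by (cases n) auto
  have "0 \<le> (\<Sum>j<m. (1 - p) ^ Suc j)"
    using assms by (intro sum_nonneg) simp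
  then show ?thesis
    unfolding finder_share_def n by (subst sum.lessThan_Suc_shift) simp
qed

lemma finder_share_le_one:
  assumes "0 \<le> p" "p \<le> 1"
  shows "finder_share n p \<le> 1"
proof -
  have "(\<Sum>j<n. (1 - p) ^ j) \<le> (\<Sum>j<n. 1)"
    using assms by (intro sum_mono power_le_one) auto
  then show ?thesis unfolding finder_share_def by (cases "n = 0") (auto simp: divide_le_eq)
qed

lemma finder_share_antimono:
  assumes "0 \<le> p" "p \<le> p'" "p' \<le> 1"
  shows "finder_share n p' \<le> finder_share n p"
  unfolding finder_share_def using assms by (intro divide_right_mono sum_mono power_mono) auto

lemma continuous_on_finder_share: "continuous_on UNIV (finder_share n)"
  unfolding finder_share_def by (cases "n = 0") (auto intro!: continuous_intros)

lemma mult_finder_share_mult_le: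
  assumes "0 \<le> q" "q \<le> 1" "0 \<le> p" "p \<le> 1"
  shows "q * finder_share n (q * p) \<le> finder_share n p"
proof (cases "p = 0")
  case True
  then show ?thesis using assms finder_share_pos[of n 0] by (cases "n = 0") (auto simp: finder_share_def)
next
  case False
  then have "0 < p" using assms by simp
  have "(1 - p) ^ n \<le> (1 - q * p) ^ n"
    using assms mult_left_le_one_le[of p q] by (intro power_mono) auto
  then have "(q * p) * finder_share n (q * p) \<le> p * finder_share n p"
    unfolding mult_finder_share by (simp add: divide_right_mono)
  then have "p * (q * finder_share n (q * p)) \<le> p * finder_share n p"
    by (simp add: ac_simps)
  then show ?thesis using \<open>0 < p\<close> by simp
qed

lemma Phi_bounds:
  assumes "n \<ge> 1" "0 \<le> F c" "F c \<le> 1" "0 \<le> q" "q \<le> 1"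
  shows "0 \<le> Phi F n c q" "Phi F n c q \<le> Phi F n c 1"
proof -
  have "0 \<le> q * F c" "q * F c \<le> 1" using assms by (auto intro: mult_le_one)
  then show "0 \<le> Phi F n c q"
    using assms finder_share_pos[of n "q * F c"] by (simp add: Phi_eq_finder_share)
  show "Phi F n c q \<le> Phi F n c 1"
    using assms mult_finder_share_mult_le by (simp add: Phi_eq_finder_share)
qed

lemma Psi_bounds:
  assumes "n \<ge> 1" "0 \<le> F c" "F c \<le> 1"
    and "\<forall>l<L. 0 \<le> mu l \<and> mu l \<le> 1" "\<forall>l<L. 0 \<le> q l \<and> q l \<le> 1"
    and "\<forall>l<L. 0 \<le> v l" "0 \<le> va" "0 \<le> qa" "qa \<le> 1"
  shows "0 \<le> Psi F n L mu q c v va qa"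
    "Psi F n L mu q c v va qa \<le> ((\<Sum>l<L. v l) + va) * Phi F n c 1"
proof -
  note Phi_q = Phi_bounds[where F = F and c = c, OF assms(1-3)]
  have "0 \<le> v l * mu l * Phi F n c (q l)" if "l < L" for l
    using assms that Phi_q[of "q l"] by (auto intro!: mult_nonneg_nonneg)
  then show "0 \<le> Psi F n L mu q c v va qa"
    unfolding Psi_def using assms Phi_q[of qa] by (intro add_nonneg_nonneg sum_nonneg) auto
  have "v l * mu l * Phi F n c (q l) \<le> v l * Phi F n c 1" if "l < L" for l
  proof -
    have "mu l * Phi F n c (q l) \<le> 1 * Phi F n c 1"
      using assms that Phi_q[of "q l"] by (intro mult_mono) auto
    then show ?thesis using assms that by (simp add: mult.assoc mult_left_mono)
  qed
  then show "Psi F n L mu q c v va qa \<le> ((\<Sum>l<L. v l) + va) * Phi F n c 1"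
    unfolding Psi_def distrib_right sum_distrib_right
    using assms Phi_q[of qa] by (intro add_mono sum_mono mult_left_mono) auto
qed

lemma Phi_one_pos:
  assumes "n \<ge> 1" "0 \<le> F c" "F c \<le> 1"
  shows "0 < Phi F n c 1"
  using finder_share_pos[OF assms] by (simp add: Phi_eq_finder_share[OF assms(1)])

lemma Phi_one_le_one:
  assumes "n \<ge> 1" "0 \<le> F c" "F c \<le> 1"
  shows "Phi F n c 1 \<le> 1"
  using finder_share_le_one[OF assms(2,3)] by (simp add: Phi_eq_finder_share[OF assms(1)])

lemma antimono_Phi_one:
  assumes "n \<ge> 1" "mono F" "\<And>x. 0 \<le> F x" "\<And>x. F x \<le> 1"
  shows "antimono (\<lambda>c. Phi F n c 1)"
proof (rule antimonoI)
  fix x y :: real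
  assume "x \<le> y"
  then show "Phi F n y 1 \<le> Phi F n x 1"
    using finder_share_antimono[OF assms(3) monoD[OF assms(2)] assms(4)]
    by (simp add: Phi_eq_finder_share[OF assms(1)])
qed

lemma continuous_on_Phi_one:
  assumes "n \<ge> 1" "continuous_on UNIV F"
  shows "continuous_on UNIV (\<lambda>c. Phi F n c 1)"
proof -
  have "continuous_on UNIV (finder_share n \<circ> F)"
    by (rule continuous_on_compose[OF assms(2) continuous_on_subset[OF continuous_on_finder_share subset_UNIV]])
  then show ?thesis by (simp add: Phi_eq_finder_share[OF assms(1)] comp_def)
qed

lemma Cset_eq:
  assumes "n \<ge> 1" "\<And>x. 0 \<le> F x" "\<And>x. F x \<le> 1"
    and "\<forall>l<L. 0 \<le> mu l \<and> mu l \<le> 1" "\<forall>l<L. 0 \<le> q l \<and> q l \<le> 1"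
  shows "Cset F n L mu q v = {c. 0 \<le> c \<and> c \<le> v * Phi F n c 1}"
proof (intro set_eqI iffI)
  fix c
  assume "c \<in> Cset F n L mu q v"
  then obtain w w\<^sub>a q\<^sub>a where fixed: "c = Psi F n L mu q c w w\<^sub>a q\<^sub>a"
    and budget: "(\<Sum>l<L. w l) + w\<^sub>a \<le> v"
    and prizes: "\<forall>l<L. 0 \<le> w l" "0 \<le> w\<^sub>a" "0 \<le> q\<^sub>a" "q\<^sub>a \<le> 1"
    unfolding Cset_def by blast
  note bounds = Psi_bounds[where F = F and c = c, OF assms(1-5) prizes, folded fixed]
  moreover have "((\<Sum>l<L. w l) + w\<^sub>a) * Phi F n c 1 \<le> v * Phi F n c 1"
    using budget Phi_one_pos[where F = F, OF assms(1-3)] by (simp add: mult_right_mono)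
  ultimately show "c \<in> {c. 0 \<le> c \<and> c \<le> v * Phi F n c 1}" by auto
next
  fix c
  assume c: "c \<in> {c. 0 \<le> c \<and> c \<le> v * Phi F n c 1}"
  have pos: "0 < Phi F n c 1" using Phi_one_pos[where F = F, OF assms(1-3)] .
  have "c = Psi F n L mu q c (\<lambda>_. 0) (c / Phi F n c 1) 1"
    unfolding Psi_def using pos by simp
  moreover have "0 \<le> c / Phi F n c 1" "c / Phi F n c 1 \<le> v"
    using c pos by (simp_all add: pos_divide_le_eq)
  ultimately show "c \<in> Cset F n L mu q v"
    unfolding Cset_def by force
qed

lemma le_fixed_point_iff:
  fixes g :: "real \<Rightarrow> real"
  assumes "antimono g" "0 \<le> v" "c\<^sub>0 = v * g c\<^sub>0"
  shows "c \<le> c\<^sub>0 \<longleftrightarrow> c \<le> v * g c"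
proof -
  have increasing: "x - v * g x < y - v * g y" if "x < y" for x y
  proof -
    have "v * g y \<le> v * g x"
      using antimonoD[OF assms(1), of x y] that assms(2) by (simp add: mult_left_mono)
    then show ?thesis using that by linarith
  qed
  show ?thesis
    using increasing[of c c\<^sub>0] increasing[of c\<^sub>0 c] assms(3) by (cases c c\<^sub>0 rule: linorder_cases) auto
qed

lemma ex1_fixed_point:
  fixes g :: "real \<Rightarrow> real"
  assumes "antimono g" "continuous_on UNIV g" "0 \<le> g 0" "0 < v" "g v \<le> 1"
  shows "\<exists>!c. c = v * g c"
proof -
  have "\<exists>c\<ge>0. c \<le> v \<and> c - v * g c = 0"
  proof (rule IVT')
    show "continuous_on {0..v} (\<lambda>c. c - v * g c)"
      by (intro continuous_intros continuous_on_subset[OF assms(2)]) auto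
  qed (use assms in \<open>auto simp: mult_le_cancel_left1\<close>)
  then obtain c where fixed: "c = v * g c" by auto
  moreover have "d = c" if "d = v * g d" for d
  proof (rule order_antisym)
    show "d \<le> c" using le_fixed_point_iff[OF assms(1) _ fixed, of d] that assms(4) by simp
    show "c \<le> d" using le_fixed_point_iff[OF assms(1) _ that, of c] fixed assms(4) by simp
  qed
  ultimately show ?thesis by blast
qed

lemma fixed_point_strict_mono:
  fixes g :: "real \<Rightarrow> real"
  assumes "antimono g" "\<And>c. 0 < g c" "0 \<le> v\<^sub>1" "v\<^sub>1 < v\<^sub>2"
    and "c\<^sub>1 = v\<^sub>1 * g c\<^sub>1" "c\<^sub>2 = v\<^sub>2 * g c\<^sub>2"
  shows "c\<^sub>1 < c\<^sub>2"
proof (rule ccontr)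
  assume "\<not> c\<^sub>1 < c\<^sub>2"
  then have "v\<^sub>1 * g c\<^sub>1 \<le> v\<^sub>1 * g c\<^sub>2"
    using antimonoD[OF assms(1), of c\<^sub>2 c\<^sub>1] assms(3) by (simp add: mult_left_mono)
  also have "\<dots> < v\<^sub>2 * g c\<^sub>2" using assms(2,4) by simp
  finally show False using \<open>\<not> c\<^sub>1 < c\<^sub>2\<close> assms(5,6) by simp
qed

theorem lemma4:
  fixes cl ch :: ereal and F f :: "real \<Rightarrow> real" and n L :: nat
    and mu q :: "nat \<Rightarrow> real"
  assumes "cost_dist cl ch F f"
    and "n \<ge> 1"
    and "\<forall>l<L. 0 < mu l \<and> mu l \<le> 1"
    and "\<forall>l<L. 0 < q l \<and> q l \<le> 1"
  shows "(\<forall>vbar>0. \<exists>!c. c = vbar * Phi F n c 1)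
       \<and> strict_mono_on {0<..} (c_a F n)
       \<and> (\<forall>vbar>0. Cset F n L mu q vbar = {0 .. c_a F n vbar})"
proof -
  define g where "g = (\<lambda>c. Phi F n c 1)"
  note F_range = cost_dist_range[OF assms(1)]
  have "mono F" "continuous_on UNIV F"
    using assms(1) unfolding cost_dist_def by auto
  have g_pos: "0 < g c" and g_le_one: "g c \<le> 1" for c
    unfolding g_def using Phi_one_pos[where F = F, OF assms(2) F_range] Phi_one_le_one[where F = F, OF assms(2) F_range] by auto
  have g_antimono: "antimono g"
    unfolding g_def using antimono_Phi_one[OF assms(2) \<open>mono F\<close> F_range] .
  have g_continuous: "continuous_on UNIV g"
    unfolding g_def using continuous_on_Phi_one[OF assms(2) \<open>continuous_on UNIV F\<close>] .
  have ex1: "\<exists>!c. c = v * g c" if "0 < v" for v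
    using ex1_fixed_point[OF g_antimono g_continuous less_imp_le[OF g_pos] that g_le_one] .
  have c_a_fixed: "c_a F n v = v * g (c_a F n v)" if "0 < v" for v
    using theI'[OF ex1[OF that]] by (simp add: c_a_def g_def)
  have "strict_mono_on {0<..} (c_a F n)"
    by (rule strict_mono_onI, rule fixed_point_strict_mono[OF g_antimono g_pos _ _ c_a_fixed c_a_fixed]) auto
  moreover have "Cset F n L mu q v = {0 .. c_a F n v}" if "0 < v" for v
  proof -
    have "\<forall>l<L. 0 \<le> mu l \<and> mu l \<le> 1" "\<forall>l<L. 0 \<le> q l \<and> q l \<le> 1"
      using assms(3,4) by (simp_all add: less_imp_le)
    then have "Cset F n L mu q v = {c. 0 \<le> c \<and> c \<le> v * g c}"
      using Cset_eq[OF assms(2) F_range] by (simp add: g_def)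
    also have "\<dots> = {0 .. c_a F n v}"
      using le_fixed_point_iff[OF g_antimono less_imp_le[OF that] c_a_fixed[OF that]] by fastforce
    finally show ?thesis .
  qed
  ultimately show ?thesis using ex1 unfolding g_def by blast
qed

end
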